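(* Let $a\geq 0$ and $b\in\mathbb{Z}/11\mathbb{Z}$. Then $\operatorname{Hom}(\mathcal{O},\mathcal{O}(a,b))\neq 0$ on $X_w$ unless either $a=0$ and $b\neq 0$, or $(a,b)\in\mathbb{X}:=\{(1,0),(1,2),(1,6),(1,7),(1,8),(1,10),(2,0)\}$.
   Context: Let $w=x_1^2x_2+x_2^2x_3+x_3^2x_4+x_4^2x_5+x_5^2x_1$, $\Gamma_w=\{(t_1,\ldots,t_6)\in\mathbb{G}_m^{6} : w(t_1x_1,\ldots,t_5x_5)=t_6\,w(x)\}$ acting on $\mathbb{A}^5$ via the first $5$ coordinates, and $X_w=[(\operatorname{Spec}(\mathbb{C}[x_1,\ldots,x_5]/(w))\setminus 0)/\Gamma_w]$. One has $\Gamma_w\cong\mathbb{G}_m\times\mathbb{Z}/11\mathbb{Z}$, where $\mathbb{G}_m$ acts by $\lambda\cdot x=(\lambda x_1,\ldots,\lambda x_5)$ and $\mathbb{Z}/11\mathbb{Z}$ is generated by $\rho=(\xi,\xi^9,\xi^4,\xi^3,\xi^5)$ with $\xi$ a primitive $11$th root of unity; so $X_w=[Z_w/\langle\rho\rangle]$ with $Z_w\subset\mathbb{P}^4$ the cubic threefold $w=0$, and $\operatorname{Pic}(X_w)\cong\mathbb{Z}\times\mathbb{Z}/11\mathbb{Z}$. For $(a,b)\in\mathbb{Z}\times\mathbb{Z}/11\mathbb{Z}$, $\mathcal{O}(a,b)$ denotes the corresponding line bundle, normalized so that, grading $\mathbb{C}[x_1,\ldots,x_5]$ by $\mathbb{Z}\times\mathbb{Z}/11\mathbb{Z}$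 with $\deg x_1=(1,1)$, $\deg x_2=(1,9)$, $\deg x_3=(1,4)$, $\deg x_4=(1,3)$, $\deg x_5=(1,5)$, the space $\operatorname{Hom}(\mathcal{O},\mathcal{O}(a,b))$ is the bidegree-$(a,b)$ part of $\mathbb{C}[x_1,\ldots,x_5]/(w)$; and $\mathcal{O}=\mathcal{O}(0,0)$. *)

theory Defs
  imports Complex_Main "HOL-Library.Poly_Mapping" "HOL-Library.Product_Plus"
begin

text \<open>Exponent vectors (e1,...,e5) of monomials x1^e1 ... x5^e5 in C[x1,...,x5];
  componentwise addition corresponds to multiplying monomials.\<close>
type_synonym mon5 = "nat \<times> nat \<times> nat \<times> nat \<times> nat"

type_synonym poly5 = "mon5 \<Rightarrow>\<^sub>0 complex"

definition X5 :: "mon5 \<Rightarrow> poly5" where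
  "X5 m = Poly_Mapping.single m 1"

definition w_poly :: poly5 where
  "w_poly = X5 (2,1,0,0,0) + X5 (0,2,1,0,0) + X5 (0,0,2,1,0) + X5 (0,0,0,2,1) + X5 (1,0,0,0,2)"

fun mdeg :: "mon5 \<Rightarrow> nat" where
  "mdeg (e1,e2,e3,e4,e5) = e1 + e2 + e3 + e4 + e5"

fun mgrade :: "mon5 \<Rightarrow> nat" where
  "mgrade (e1,e2,e3,e4,e5) = (e1 + 9*e2 + 4*e3 + 3*e4 + 5*e5) mod 11"

definition bihom :: "nat \<Rightarrow> nat \<Rightarrow> poly5 set" where
  "bihom a b = {p. \<forall>m\<in>Poly_Mapping.keys p. mdeg m = a \<and> mgrade m = b mod 11}"

definition w_ideal :: "poly5 set" where
  "w_ideal = {w_poly * q | q. True}"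

text \<open>Hom(O, O(a,b)) = bidegree-(a,b) part of C[x1..x5]/(w), i.e. bihom a b modulo
  (bihom a b \<inter> (w)); it is nonzero iff some bihomogeneous element is not in (w).\<close>
definition Hom_nonzero :: "nat \<Rightarrow> nat \<Rightarrow> bool" where
  "Hom_nonzero a b \<longleftrightarrow> (\<exists>p\<in>bihom a b. p \<notin> w_ideal)"

definition exceptional_set :: "(nat \<times> nat) set" where
  "exceptional_set = {(1,0),(1,2),(1,6),(1,7),(1,8),(1,10),(2,0)}"

end

theory Submission
  imports Defs
begin

text \<open>The point (-3,-3,2,2,1) lies on the cubic w = 0 and has no vanishing coordinate.
  Evaluation there is a ring homomorphism killing the ideal (w) but no monomial, so every
  monomial is nonzero in C[x1,...,x5]/(w), and it remains to exhibit a monomial of each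
  admissible bidegree. The degree-one grades are 1, 3, 4, 5, 9; explicit monomials realise
  every nonzero grade in degree two and every grade in degree three, and multiplication by
  x1 raises the grade by one, so all grades occur in every degree from three on.\<close>

definition eval_char :: "('a \<Rightarrow> 'b) \<Rightarrow> ('a \<Rightarrow>\<^sub>0 'b) \<Rightarrow> 'b :: comm_semiring_1" where
  "eval_char \<chi> p = (\<Sum>k\<in>Poly_Mapping.keys p. Poly_Mapping.lookup p k * \<chi> k)"

lemma eval_char_eq_sum:
  assumes "finite A" and "Poly_Mapping.keys p \<subseteq> A"
  shows "eval_char \<chi> p = (\<Sum>k\<in>A. Poly_Mapping.lookup p k * \<chi> k)"
  unfolding eval_char_def
  using assms by (intro sum.mono_neutral_left) (auto simp: in_keys_iff)

lemma eval_char_zero [simp]: "eval_char \<chi> 0 = 0"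
  by (simp add: eval_char_def)

lemma eval_char_single [simp]: "eval_char \<chi> (Poly_Mapping.single k c) = c * \<chi> k"
  by (simp add: eval_char_def)

lemma eval_char_add: "eval_char \<chi> (p + q) = eval_char \<chi> p + eval_char \<chi> q"
proof -
  let ?A = "Poly_Mapping.keys p \<union> Poly_Mapping.keys q"
  have "eval_char \<chi> (p + q) = (\<Sum>k\<in>?A. Poly_Mapping.lookup (p + q) k * \<chi> k)"
    by (rule eval_char_eq_sum) (auto simp: Poly_Mapping.keys_add)
  also have "\<dots> = (\<Sum>k\<in>?A. Poly_Mapping.lookup p k * \<chi> k) + (\<Sum>k\<in>?A. Poly_Mapping.lookup q k * \<chi> k)"
    by (simp add: lookup_add distrib_right sum.distrib)
  also have "\<dots> = eval_char \<chi> p + eval_char \<chi> q"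
    using eval_char_eq_sum[of ?A p] eval_char_eq_sum[of ?A q] by simp
  finally show ?thesis .
qed

lemma update_eq_add_single:
  "k \<notin> Poly_Mapping.keys p \<Longrightarrow> Poly_Mapping.update k c p = p + Poly_Mapping.single k c"
  by (rule poly_mapping_eqI) (auto simp: lookup_update lookup_add lookup_single in_keys_iff)

context
  fixes \<chi> :: "'a :: monoid_add \<Rightarrow> 'b :: comm_semiring_1"
  assumes \<chi>_add: "\<And>k l. \<chi> (k + l) = \<chi> k * \<chi> l"
begin

lemma eval_char_single_mult:
  "eval_char \<chi> (Poly_Mapping.single k c * q) = c * \<chi> k * eval_char \<chi> q"
proof (induction q rule: update_induct)
  case (update q l d)
  then show ?case
    by (simp add: update_eq_add_single distrib_left eval_char_add mult_single \<chi>_add mult_ac)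
qed simp

lemma eval_char_mult: "eval_char \<chi> (p * q) = eval_char \<chi> p * eval_char \<chi> q"
proof (induction p rule: update_induct)
  case (update p k c)
  then show ?case
    by (simp add: update_eq_add_single distrib_right eval_char_add eval_char_single_mult)
qed simp

end

fun point_char :: "mon5 \<Rightarrow> complex" where
  "point_char (e1, e2, e3, e4, e5) = (-3) ^ e1 * (-3) ^ e2 * 2 ^ e3 * 2 ^ e4"

lemma point_char_add: "point_char (m + n) = point_char m * point_char n"
  by (cases m; cases n) (simp add: power_add)

lemma point_char_nonzero: "point_char m \<noteq> 0"
  by (cases m) simp

lemma eval_point_w_poly: "eval_char point_char w_poly = 0"
  by (simp add: w_poly_def X5_def eval_char_add)

lemma monomial_notin_w_ideal: "X5 m \<notin> w_ideal"
proof
  assume "X5 m \<in> w_ideal"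
  then obtain q where "X5 m = w_poly * q"
    by (auto simp: w_ideal_def)
  then have "eval_char point_char (X5 m) = 0"
    by (simp add: eval_char_mult[where \<chi> = point_char, OF point_char_add] eval_point_w_poly)
  then show False
    by (simp add: X5_def point_char_nonzero)
qed

lemma monomial_in_bihom: "X5 m \<in> bihom (mdeg m) (mgrade m)"
  by (cases m) (simp add: bihom_def X5_def)

definition has_monomial_of_bidegree :: "nat \<Rightarrow> nat \<Rightarrow> bool" where
  "has_monomial_of_bidegree a b \<longleftrightarrow> (\<exists>m. mdeg m = a \<and> mgrade m = b)"

lemma has_monomial_of_bidegreeI:
  "mdeg m = a \<Longrightarrow> mgrade m = b \<Longrightarrow> has_monomial_of_bidegree a b"
  unfolding has_monomial_of_bidegree_def by blast

lemma Hom_nonzero_if_has_monomial: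
  "has_monomial_of_bidegree a b \<Longrightarrow> Hom_nonzero a b"
  using monomial_in_bihom monomial_notin_w_ideal
  unfolding has_monomial_of_bidegree_def Hom_nonzero_def by blast

lemma has_monomial_of_bidegree_Suc:
  assumes "has_monomial_of_bidegree a b"
  shows "has_monomial_of_bidegree (Suc a) (Suc b mod 11)"
proof -
  obtain e1 e2 e3 e4 e5 where "mdeg (e1, e2, e3, e4, e5) = a" "mgrade (e1, e2, e3, e4, e5) = b"
    using assms unfolding has_monomial_of_bidegree_def by auto
  then show ?thesis
    by (intro has_monomial_of_bidegreeI[of "(Suc e1, e2, e3, e4, e5)"]) (auto simp: mod_Suc_eq)
qed

lemma less_11_cases: "(b :: nat) < 11 \<Longrightarrow> b \<in> {0, 1, 2, 3, 4, 5, 6, 7, 8, 9, 10}"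
  by (simp add: eval_nat_numeral less_Suc_eq)

lemma has_monomial_of_degree_one: "b \<in> {1, 3, 4, 5, 9} \<Longrightarrow> has_monomial_of_bidegree 1 b"
  by (elim insertE emptyE)
    (simp_all add: has_monomial_of_bidegreeI[of "(1, 0, 0, 0, 0)"] has_monomial_of_bidegreeI[of "(0, 0, 0, 1, 0)"]
      has_monomial_of_bidegreeI[of "(0, 0, 1, 0, 0)"] has_monomial_of_bidegreeI[of "(0, 0, 0, 0, 1)"]
      has_monomial_of_bidegreeI[of "(0, 1, 0, 0, 0)"])

lemma has_monomial_of_degree_two: "0 < b \<Longrightarrow> b < 11 \<Longrightarrow> has_monomial_of_bidegree 2 b"
  by (drule less_11_cases, elim insertE emptyE)
    (simp_all add: has_monomial_of_bidegreeI[of "(0, 1, 0, 1, 0)"] has_monomial_of_bidegreeI[of "(0, 1, 1, 0, 0)"]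
      has_monomial_of_bidegreeI[of "(0, 1, 0, 0, 1)"] has_monomial_of_bidegreeI[of "(1, 0, 0, 1, 0)"]
      has_monomial_of_bidegreeI[of "(1, 0, 1, 0, 0)"] has_monomial_of_bidegreeI[of "(0, 0, 0, 2, 0)"]
      has_monomial_of_bidegreeI[of "(0, 0, 1, 1, 0)"] has_monomial_of_bidegreeI[of "(0, 0, 0, 1, 1)"]
      has_monomial_of_bidegreeI[of "(0, 0, 1, 0, 1)"] has_monomial_of_bidegreeI[of "(0, 0, 0, 0, 2)"])

lemma has_monomial_of_degree_three: "b < 11 \<Longrightarrow> has_monomial_of_bidegree 3 b"
  by (drule less_11_cases, elim insertE emptyE)
    (simp_all add: has_monomial_of_bidegreeI[of "(0, 0, 0, 2, 1)"] has_monomial_of_bidegreeI[of "(0, 0, 1, 1, 1)"]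
      has_monomial_of_bidegreeI[of "(0, 0, 0, 1, 2)"] has_monomial_of_bidegreeI[of "(0, 0, 1, 0, 2)"]
      has_monomial_of_bidegreeI[of "(0, 0, 0, 0, 3)"] has_monomial_of_bidegreeI[of "(0, 1, 1, 1, 0)"]
      has_monomial_of_bidegreeI[of "(0, 1, 0, 1, 1)"] has_monomial_of_bidegreeI[of "(0, 1, 1, 0, 1)"]
      has_monomial_of_bidegreeI[of "(0, 1, 0, 0, 2)"] has_monomial_of_bidegreeI[of "(0, 0, 0, 3, 0)"]
      has_monomial_of_bidegreeI[of "(0, 0, 1, 2, 0)"])

lemma has_monomial_of_high_degree:
  assumes "3 \<le> a" and "b < 11"
  shows "has_monomial_of_bidegree a b"
  using assms
proof (induction a arbitrary: b rule: dec_induct)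
  case base
  then show ?case by (rule has_monomial_of_degree_three)
next
  case (step a)
  have "has_monomial_of_bidegree a ((b + 10) mod 11)"
    by (rule step.IH) simp
  then have "has_monomial_of_bidegree (Suc a) (Suc ((b + 10) mod 11) mod 11)"
    by (rule has_monomial_of_bidegree_Suc)
  moreover have "Suc ((b + 10) mod 11) mod 11 = b"
    using \<open>b < 11\<close> by (simp add: mod_Suc_eq)
  ultimately show ?case by simp
qed

theorem lemma4p1:
  fixes a b :: nat
  assumes "b < 11"
    and "\<not> (a = 0 \<and> b \<noteq> 0)"
    and "(a, b) \<notin> exceptional_set"
  shows "Hom_nonzero a b"
proof (rule Hom_nonzero_if_has_monomial)
  consider "a = 0" | "a = 1" | "a = 2" | "3 \<le> a"
    by linarith
  then show "has_monomial_of_bidegree a b"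
  proof cases
    case 1
    then show ?thesis
      using assms(2) by (intro has_monomial_of_bidegreeI[of "(0, 0, 0, 0, 0)"]) simp_all
  next
    case 2
    then have "b \<in> {1, 3, 4, 5, 9}"
      using less_11_cases[OF assms(1)] assms(3) by (auto simp: exceptional_set_def)
    then show ?thesis
      using 2 has_monomial_of_degree_one by simp
  next
    case 3
    then show ?thesis
      using assms has_monomial_of_degree_two by (auto simp: exceptional_set_def)
  next
    case 4
    then show ?thesis
      using assms(1) by (rule has_monomial_of_high_degree)
  qed
qed

end
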